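(* Let $(A,\succ,\prec,\omega)$ be a quadratic Leibniz-dendriform algebra and $r\in A\otimes A$ such that $r+\tau(r)$ is invariant. Define $P:A\to A$ by $P(x)=T_r(\omega^\sharp(x))$. Then $r$ satisfies $S(r)=0$ if and only if for all $x,y\in A$: $P(x)\succ P(y)=P\big(P(x)\succ y+x\succ P(y)-x\succ T_{r+\tau(r)}\omega^\sharp(y)\big)$ and $P(x)\prec P(y)=P\big(P(x)\prec y+x\prec P(y)-x\prec T_{r+\tau(r)}\omega^\sharp(y)\big)$.
   Context: $\langle\cdot,\cdot\rangle$ is the natural pairing, $I$ the identity, $\tau(a\otimes b)=b\otimes a$. A Leibniz-dendriform algebra is a vector space $A$ with bilinear operations $\succ,\prec$ such that, with $x\circ y:=x\succ y+x\prec y$, for all $x,y,z$: $(x\circ y)\succ z=x\succ(y\succ z)-y\succ(x\succ z)$, $y\prec(x\circ z)+(x\succ y)\prec z=x\succ(y\prec z)$, $x\prec(y\circ z)=(x\prec y)\prec z+y\succ(x\prec z)$. A quadratic Leibniz-dendriform algebra is one with a non-degenerate symmetric bilinear form $\omega$ with $\omega(x\prec y,z)=\omega(x,y\circ z+z\circ y)$ and $\omega(x\succ y,z)=-\omega(y,x\circ z)$ for all $x,y,z$; $\omega^\sharp:A\to A^*$ is $\langle\omega^\sharp(x),y\rangle=\omega(x,y)$. Write $x\odot y:=x\succ y+y\prec x$, $x\star y:=x\circ y+y\circ x$; $L_*(x)y=x*y$, $R_*(x)y=y*x$; $L_\odot:=L_\succ+R_\prec$, $L_\star:=L_\circ+R_\circ$.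 For $r=\sum_ia_i\otimes b_i$: $T_r:A^*\to A$, $\langle T_r(\zeta),\eta\rangle=\langle r,\zeta\otimes\eta\rangle$; $S(r):=\sum_{i,j}\big(a_i\otimes a_j\otimes (b_j\circ b_i)-a_i\otimes (b_i\odot a_j)\otimes b_j-(a_i\succ a_j)\otimes b_i\otimes b_j\big)$. $s\in A\otimes A$ is invariant if for all $x$: $(L_\odot(x)\otimes I-I\otimes R_\circ(x))s=0$ and $(L_\star(x)\otimes I-I\otimes R_\prec(x))\tau(s)=0$. *)

theory Defs
  imports Main "HOL-Library.Function_Algebras"
begin

(* The algebra A is finite-dimensional over a field 'k; we fix a basis
indexed by a finite type 'n and identify A with 'n \<Rightarrow> 'k (coordinates).
A\<^sup>* is identified with 'n \<Rightarrow> 'k via the dual basis, so that the natural pairing is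
\<langle>\<zeta>, x\<rangle> = \<Sum>i. \<zeta> i * x i.  Tensors in A\<otimes>A (resp. A\<otimes>A\<otimes>A) are given by their
coefficient arrays 'n \<Rightarrow> 'n \<Rightarrow> 'k (resp. 'n \<Rightarrow> 'n \<Rightarrow> 'n \<Rightarrow> 'k) w.r.t. the basis
e i \<otimes> e j (resp. e i \<otimes> e j \<otimes> e k). *)

type_synonym ('k,'n) op = "('n \<Rightarrow> 'k) \<Rightarrow> ('n \<Rightarrow> 'k) \<Rightarrow> ('n \<Rightarrow> 'k)"

definition bvec :: "'n \<Rightarrow> 'n \<Rightarrow> 'k::field" where
  "bvec i = (\<lambda>j. if j = i then 1 else 0)"

definition smul :: "'k::field \<Rightarrow> ('n \<Rightarrow> 'k) \<Rightarrow> ('n \<Rightarrow> 'k)" where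
  "smul c x = (\<lambda>i. c * x i)"

definition bilinear_op :: "('k::field,'n) op \<Rightarrow> bool" where
  "bilinear_op m \<longleftrightarrow>
     (\<forall>x y z. m (x + y) z = m x z + m y z) \<and>
     (\<forall>x y z. m x (y + z) = m x y + m x z) \<and>
     (\<forall>c x y. m (smul c x) y = smul c (m x y)) \<and>
     (\<forall>c x y. m x (smul c y) = smul c (m x y))"

definition bilinear_form :: "(('n \<Rightarrow> 'k::field) \<Rightarrow> ('n \<Rightarrow> 'k) \<Rightarrow> 'k) \<Rightarrow> bool" where
  "bilinear_form w \<longleftrightarrow>
     (\<forall>x y z. w (x + y) z = w x z + w y z) \<and>
     (\<forall>x y z. w x (y + z) = w x y + w x z) \<and>
     (\<forall>c x y. w (smul c x) y = c * w x y) \<and>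
     (\<forall>c x y. w x (smul c y) = c * w x y)"

definition circ_op :: "('k::field,'n) op \<Rightarrow> ('k,'n) op \<Rightarrow> ('k,'n) op" where
  "circ_op sc pr = (\<lambda>x y. sc x y + pr x y)"

definition odot_op :: "('k::field,'n) op \<Rightarrow> ('k,'n) op \<Rightarrow> ('k,'n) op" where
  "odot_op sc pr = (\<lambda>x y. sc x y + pr y x)"

definition star_op :: "('k::field,'n) op \<Rightarrow> ('k,'n) op \<Rightarrow> ('k,'n) op" where
  "star_op sc pr = (\<lambda>x y. circ_op sc pr x y + circ_op sc pr y x)"

definition LD_algebra :: "('k::field,'n) op \<Rightarrow> ('k,'n) op \<Rightarrow> bool" where
  "LD_algebra sc pr \<longleftrightarrow> bilinear_op sc \<and> bilinear_op pr \<and>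
    (\<forall>x y z. sc (circ_op sc pr x y) z = sc x (sc y z) - sc y (sc x z)) \<and>
    (\<forall>x y z. pr y (circ_op sc pr x z) + pr (sc x y) z = sc x (pr y z)) \<and>
    (\<forall>x y z. pr x (circ_op sc pr y z) = pr (pr x y) z + sc y (pr x z))"

definition quadratic_LD_algebra ::
  "('k::field,'n) op \<Rightarrow> ('k,'n) op \<Rightarrow> (('n \<Rightarrow> 'k) \<Rightarrow> ('n \<Rightarrow> 'k) \<Rightarrow> 'k) \<Rightarrow> bool" where
  "quadratic_LD_algebra sc pr w \<longleftrightarrow> LD_algebra sc pr \<and> bilinear_form w \<and>
    (\<forall>x y. w x y = w y x) \<and>
    (\<forall>x. (\<forall>y. w x y = 0) \<longrightarrow> x = 0) \<and>
    (\<forall>x y z. w (pr x y) z = w x (circ_op sc pr y z + circ_op sc pr z y)) \<and>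
    (\<forall>x y z. w (sc x y) z = - w y (circ_op sc pr x z))"

definition tau2 :: "('n \<Rightarrow> 'n \<Rightarrow> 'k) \<Rightarrow> ('n \<Rightarrow> 'n \<Rightarrow> 'k)" where
  "tau2 s = (\<lambda>p q. s q p)"

definition tensmap :: "(('n::finite \<Rightarrow> 'k::field) \<Rightarrow> ('n \<Rightarrow> 'k)) \<Rightarrow> (('n \<Rightarrow> 'k) \<Rightarrow> ('n \<Rightarrow> 'k))
    \<Rightarrow> ('n \<Rightarrow> 'n \<Rightarrow> 'k) \<Rightarrow> ('n \<Rightarrow> 'n \<Rightarrow> 'k)" where
  "tensmap f g s = (\<lambda>p q. \<Sum>i\<in>UNIV. \<Sum>j\<in>UNIV. s i j * f (bvec i) p * g (bvec j) q)"

definition invariant_tensor :: "('k::field,'n::finite) op \<Rightarrow> ('k,'n) op \<Rightarrow> ('n \<Rightarrow> 'n \<Rightarrow> 'k) \<Rightarrow> bool" where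
  "invariant_tensor sc pr s \<longleftrightarrow> (\<forall>x.
     (\<lambda>p q. tensmap (\<lambda>y. odot_op sc pr x y) id s p q - tensmap id (\<lambda>y. circ_op sc pr y x) s p q)
       = (\<lambda>p q. 0) \<and>
     (\<lambda>p q. tensmap (\<lambda>y. star_op sc pr x y) id (tau2 s) p q - tensmap id (\<lambda>y. pr y x) (tau2 s) p q)
       = (\<lambda>p q. 0))"

(* T_r : A\<^sup>* \<rightarrow> A, \<langle>T_r \<zeta>, \<eta>\<rangle> = \<langle>r, \<zeta>\<otimes>\<eta>\<rangle> *)
definition Tmap :: "('n::finite \<Rightarrow> 'n \<Rightarrow> 'k::field) \<Rightarrow> ('n \<Rightarrow> 'k) \<Rightarrow> ('n \<Rightarrow> 'k)" where
  "Tmap r \<zeta> = (\<lambda>j. \<Sum>i\<in>UNIV. r i j * \<zeta> i)"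

(* \<omega>\<^sup>\<sharp>(x) = \<Sum>i \<omega>(x, e_i) e_i\<^sup>* *)
definition sharp :: "(('n \<Rightarrow> 'k::field) \<Rightarrow> ('n \<Rightarrow> 'k) \<Rightarrow> 'k) \<Rightarrow> ('n \<Rightarrow> 'k) \<Rightarrow> ('n \<Rightarrow> 'k)" where
  "sharp w x = (\<lambda>i. w x (bvec i))"

(* S(r) \<in> A\<otimes>A\<otimes>A, expanded with r = \<Sum>_{i,j} r i j e_i \<otimes> e_j *)
definition S_tensor :: "('k::field,'n::finite) op \<Rightarrow> ('k,'n) op \<Rightarrow> ('n \<Rightarrow> 'n \<Rightarrow> 'k)
    \<Rightarrow> ('n \<Rightarrow> 'n \<Rightarrow> 'n \<Rightarrow> 'k)" where
  "S_tensor sc pr r = (\<lambda>p q s. \<Sum>i\<in>UNIV. \<Sum>j\<in>UNIV. \<Sum>k\<in>UNIV. \<Sum>l\<in>UNIV. r i j * r k l *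
      (bvec i p * bvec k q * circ_op sc pr (bvec l) (bvec j) s
       - bvec i p * odot_op sc pr (bvec j) (bvec k) q * bvec l s
       - sc (bvec i) (bvec k) p * bvec j q * bvec l s))"

end

theory Submission
  imports Defs "HOL.Vector_Spaces"
begin

text \<open>Put \<open>P = T\<^sub>r \<omega>\<^sup>\<sharp>\<close>, \<open>Q = T\<^bsub>\<tau>(r)\<^esub> \<omega>\<^sup>\<sharp>\<close> and \<open>R = P + Q = T\<^bsub>r+\<tau>(r)\<^esub> \<omega>\<^sup>\<sharp>\<close>; then
  \<open>Q\<close> is the \<open>\<omega>\<close>-adjoint of \<open>P\<close>, and invariance of \<open>r + \<tau>(r)\<close> says exactly that \<open>R\<close> commutes
  with \<open>\<succ>\<close> and \<open>\<prec>\<close> in either argument. So the two identities of the theorem read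
  \<open>P x * P y = P (x * P y - Q x * y)\<close> for \<open>* \<in> {\<succ>, \<prec>}\<close>. Evaluating
  \<open>\<omega>(P y \<circ> P x - P (y \<circ> P x - Q y \<circ> x), z)\<close> on the \<open>\<omega>\<close>-dual basis gives the coefficients
  of \<open>S(r)\<close>, so \<open>S(r) = 0\<close> is the same identity for \<open>\<circ>\<close>. Centrality of \<open>R\<close> turns the
  identity for \<open>P\<close> into the one for \<open>Q\<close> with the roles of \<open>P\<close> and \<open>Q\<close> exchanged, and the
  invariance of \<open>\<omega>\<close> converts the \<open>Q\<close>-identity for \<open>\<circ>\<close> (resp. \<open>\<star> = \<circ> + \<circ>\<^sup>o\<^sup>p\<close>) into the
  \<open>P\<close>-identity for \<open>\<succ>\<close> (resp. \<open>\<prec>\<close>); the \<open>\<star>\<close>-identity for \<open>P\<close> follows from the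
  \<open>\<circ>\<close>-identity by centrality once more. Conversely \<open>\<circ> = \<succ> + \<prec>\<close>.\<close>

lemma sum_fun_apply: "(\<Sum>i\<in>A. f i) x = (\<Sum>i\<in>A. f i x)"
  by (induction A rule: infinite_finite_induct) auto

lemma bvec_apply: "bvec i j = (if i = j then 1 else 0)"
  by (auto simp: bvec_def)

lemma sum_mult_bvec: "(\<Sum>p::'n::finite\<in>UNIV. f p * bvec i p) = (f i :: 'k::field)"
proof -
  have "(\<Sum>p\<in>UNIV. f p * bvec i p) = (\<Sum>p\<in>UNIV. if i = p then f p else 0)"
    by (rule sum.cong) (simp_all add: bvec_apply)
  then show ?thesis by simp
qed

lemma sum_mult_bvec': "(\<Sum>p::'n::finite\<in>UNIV. f p * bvec p i) = (f i :: 'k::field)"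
  using sum_mult_bvec[of f i] by (simp add: bvec_def eq_commute)

lemma smul_diff: "smul c (x - y) = smul c x - smul c y"
  by (simp add: smul_def fun_eq_iff right_diff_distrib)

lemma coordinate_expansion: "(v::'n::finite \<Rightarrow> 'k::field) = (\<Sum>j\<in>UNIV. smul (v j) (bvec j))"
  by (rule ext) (simp add: sum_fun_apply smul_def sum_mult_bvec')

lemma additive_sum_smul:
  assumes "additive f" and "\<And>c x. f (smul c x) = s c (f x)"
  shows "f (\<Sum>j\<in>A. smul (c j) (b j)) = (\<Sum>j\<in>A. s (c j) (f (b j)))"
  by (simp add: additive.sum[OF assms(1)] assms(2))

lemma linear_functional_expansion:
  fixes f :: "('n::finite \<Rightarrow> 'k::field) \<Rightarrow> 'k"
  assumes "additive f" and "\<And>c x. f (smul c x) = c * f x"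
  shows "f v = (\<Sum>j\<in>UNIV. v j * f (bvec j))"
proof -
  have "f v = f (\<Sum>j\<in>UNIV. smul (v j) (bvec j))"
    by (simp only: coordinate_expansion[symmetric])
  also have "\<dots> = (\<Sum>j\<in>UNIV. v j * f (bvec j))"
    by (rule additive_sum_smul[where s="(*)", OF assms])
  finally show ?thesis .
qed

lemma vector_space_smul: "vector_space (smul :: 'k::field \<Rightarrow> ('n \<Rightarrow> 'k) \<Rightarrow> _)"
  unfolding vector_space_def smul_def by (auto simp: fun_eq_iff algebra_simps)

lemma range_bvec_apply:
  "v \<in> range bvec \<Longrightarrow> v i = (if v = bvec i then 1 else (0::'k::field))"
proof -
  assume "v \<in> range bvec"
  then obtain j where "v = bvec j" by blast
  moreover have "bvec j = bvec i \<longleftrightarrow> j = i"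
    by (auto simp: bvec_apply fun_eq_iff dest: spec[of _ i])
  ultimately show ?thesis by (auto simp: bvec_apply)
qed

lemma finite_dimensional_smul:
  "finite_dimensional_vector_space (smul :: 'k::field \<Rightarrow> ('n::finite \<Rightarrow> 'k) \<Rightarrow> _) (range bvec)"
proof -
  interpret vector_space "smul :: 'k \<Rightarrow> ('n \<Rightarrow> 'k) \<Rightarrow> _" by (rule vector_space_smul)
  have "\<not> dependent (range (bvec :: 'n \<Rightarrow> 'n \<Rightarrow> 'k))"
  proof
    assume "dependent (range (bvec :: 'n \<Rightarrow> 'n \<Rightarrow> 'k))"
    then obtain t u v where t: "finite t" "t \<subseteq> range bvec" "(\<Sum>v\<in>t. smul (u v) v) = (0 :: 'n \<Rightarrow> 'k)"
      and v: "v \<in> t" "u v \<noteq> 0"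
      unfolding dependent_explicit by blast
    obtain i where i: "v = bvec i" using v t by blast
    have "(\<Sum>v\<in>t. smul (u v) v) i = (\<Sum>v'\<in>t. if v' = bvec i then u v' else 0)"
      unfolding sum_fun_apply smul_def
    proof (rule sum.cong[OF refl])
      fix v' assume "v' \<in> t"
      then have "v' \<in> range bvec" using t(2) by blast
      then show "u v' * v' i = (if v' = bvec i then u v' else 0)"
        by (simp add: range_bvec_apply)
    qed
    also have "\<dots> = u v" using t(1) v(1) i by simp
    finally show False using t(3) v(2) by simp
  qed
  moreover have "span (range (bvec :: 'n \<Rightarrow> 'n \<Rightarrow> 'k)) = UNIV"
  proof -
    have "x \<in> span (range bvec)" for x :: "'n \<Rightarrow> 'k"
      by (subst coordinate_expansion) (intro span_sum span_scale span_base rangeI)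
    then show ?thesis by blast
  qed
  ultimately show ?thesis
    by (simp add: finite_dimensional_vector_space_def finite_dimensional_vector_space_axioms_def
        vector_space_smul)
qed

lemma tensmap_id_right: "tensmap f id t p q = (\<Sum>i\<in>UNIV. t i q * f (bvec i) p)"
proof -
  have "tensmap f id t p q = (\<Sum>i\<in>UNIV. \<Sum>j\<in>UNIV. (t i j * f (bvec i) p) * bvec j q)"
    by (simp add: tensmap_def)
  then show ?thesis by (simp only: sum_mult_bvec')
qed

lemma tensmap_id_left: "tensmap id g t p q = (\<Sum>j\<in>UNIV. t p j * g (bvec j) q)"
proof -
  have "tensmap id g t p q = (\<Sum>j\<in>UNIV. \<Sum>i\<in>UNIV. (t i j * g (bvec j) q) * bvec i p)"
    by (simp add: tensmap_def mult_ac) (subst sum.swap, simp)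
  then show ?thesis by (simp only: sum_mult_bvec')
qed

lemma S_tensor_apply:
  fixes r :: "'n::finite \<Rightarrow> 'n \<Rightarrow> 'a::field"
  shows "S_tensor sc pr r p q s =
   (\<Sum>j\<in>UNIV. \<Sum>l\<in>UNIV. r p j * r q l * circ_op sc pr (bvec l) (bvec j) s)
 - (\<Sum>j\<in>UNIV. \<Sum>k\<in>UNIV. r p j * r k s * odot_op sc pr (bvec j) (bvec k) q)
 - (\<Sum>i\<in>UNIV. \<Sum>k\<in>UNIV. r i q * r k s * sc (bvec i) (bvec k) p)"
proof -
  have bvec_mult: "bvec i p * t = (if i = p then t else 0)" for i p :: 'n and t :: 'a
    by (simp add: bvec_apply)
  have mult_if: "a * (if b then t else 0) = (if b then a * t else 0)"
    and if_mult: "(if b then t else 0) * a = (if b then t * a else 0)"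
    and sum_if: "(\<Sum>q\<in>A. if b then f q else 0) = (if b then (\<Sum>q\<in>A. f q) else 0)"
    for a t :: 'a and b and f :: "'b \<Rightarrow> 'a" and A
    by simp_all
  show ?thesis
    unfolding S_tensor_def
    apply (simp only: right_diff_distrib sum_subtractf)
    apply (simp only: mult.assoc bvec_mult mult_if if_mult sum_if)
    apply (simp add: mult_ac cong: if_cong)
    apply (simp only: bvec_mult sum.delta sum.delta' UNIV_I if_True)
    apply (simp add: mult_ac)
    done
qed

text \<open>With \<open>R = P + Q\<close> central, \<open>P x * y + x * P y - x * R y = x * P y - Q x * y\<close>, so this is
  the shape of the identities in the theorem.\<close>
definition twisted_identity :: "('v \<Rightarrow> 'v \<Rightarrow> 'v::minus) \<Rightarrow> ('v \<Rightarrow> 'v) \<Rightarrow> ('v \<Rightarrow> 'v) \<Rightarrow> bool" where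
  "twisted_identity m P Q \<longleftrightarrow> (\<forall>x y. m (P x) (P y) = P (m x (P y) - m (Q x) y))"

lemma twisted_identity_swap:
  fixes m :: "'v \<Rightarrow> 'v \<Rightarrow> 'v::ab_group_add"
  assumes m_diff_left: "\<And>a b c. m (a - b) c = m a c - m b c"
    and m_diff_right: "\<And>a b c. m c (a - b) = m c a - m c b"
    and "additive Q" and "additive R"
    and R_eq: "\<And>v. R v = P v + Q v"
    and R_left: "\<And>a b. R (m a b) = m (R a) b" and R_right: "\<And>a b. R (m a b) = m a (R b)"
    and "twisted_identity m P Q"
  shows "twisted_identity m Q P"
  unfolding twisted_identity_def
proof (intro allI)
  fix x y
  have Q_diff: "Q (a - b) = Q a - Q b" and R_diff: "R (a - b) = R a - R b" for a b
    using additive.diff assms(3,4) by blast+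
  have Q_minus: "Q (- a) = - Q a" for a
    using additive.minus assms(3) by blast
  have P_eq: "P v = R v - Q v" for v
    using R_eq[of v] by simp
  txt \<open>Write \<open>P = R - Q\<close> and pull \<open>R\<close> out of every product: the \<open>R\<close>-terms on both sides
    of the \<open>P\<close>-identity agree, and what is left is the \<open>Q\<close>-identity.\<close>
  define u where "u = m x (R y) - m x (Q y) - m (Q x) y"
  have "m (P x) (P y) = R (m x (R y)) - R (m x (Q y)) - R (m (Q x) y) + m (Q x) (Q y)"
    by (simp add: P_eq m_diff_left m_diff_right R_left[of x, symmetric] R_right[of "Q x" y, symmetric]
        algebra_simps)
  moreover have "P (m x (P y) - m (Q x) y) = R (m x (R y)) - R (m x (Q y)) - R (m (Q x) y) - Q u"
    by (simp add: P_eq[of "_ - _"] P_eq[of y] m_diff_right R_diff u_def)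
  ultimately have "m (Q x) (Q y) = - Q u"
    using \<open>twisted_identity m P Q\<close> unfolding twisted_identity_def
    by (simp add: algebra_simps eq_neg_iff_add_eq_0)
  moreover have "m x (Q y) - m (P x) y = - u"
    by (simp add: u_def P_eq[of x] m_diff_left R_left[symmetric] R_right[symmetric])
  ultimately show "m (Q x) (Q y) = Q (m x (Q y) - m (P x) y)"
    by (simp add: Q_minus)
qed

locale bilinear_operation =
  fixes m :: "('k::field, 'n::finite) op"
  assumes bilinear: "bilinear_op m"
begin

lemma add_left: "m (x + y) z = m x z + m y z"
  and add_right: "m z (x + y) = m z x + m z y"
  and smul_left: "m (smul c x) z = smul c (m x z)"
  and smul_right: "m z (smul c x) = smul c (m z x)"
  using bilinear by (simp_all add: bilinear_op_def)

lemma diff_left: "m (x - y) z = m x z - m y z"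
  using additive.diff[of "\<lambda>x. m x z"] by (simp add: additive_def add_left)

lemma diff_right: "m z (x - y) = m z x - m z y"
  using additive.diff[of "m z"] by (simp add: additive_def add_right)

lemma expand_left: "m u v q = (\<Sum>i\<in>UNIV. u i * m (bvec i) v q)"
proof (rule linear_functional_expansion)
  show "additive (\<lambda>u. m u v q)" by (simp add: additive_def add_left)
  show "m (smul c x) v q = c * m x v q" for c x by (simp only: smul_left) (simp add: smul_def)
qed

lemma expand_right: "m u v q = (\<Sum>k\<in>UNIV. v k * m u (bvec k) q)"
proof (rule linear_functional_expansion)
  show "additive (\<lambda>v. m u v q)" by (simp add: additive_def add_right)
  show "m u (smul c x) q = c * m u x q" for c x by (simp only: smul_right) (simp add: smul_def)
qed

lemma expand: "m u v q = (\<Sum>i\<in>UNIV. \<Sum>k\<in>UNIV. u i * v k * m (bvec i) (bvec k) q)"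
  by (subst expand_left) (simp add: expand_right[of "bvec _" v] sum_distrib_left mult.assoc)

end

lemma bilinear_op_circ: "bilinear_op sc \<Longrightarrow> bilinear_op pr \<Longrightarrow> bilinear_op (circ_op sc pr)"
  by (simp add: bilinear_op_def circ_op_def smul_def fun_eq_iff distrib_left)

lemma bilinear_op_odot: "bilinear_op sc \<Longrightarrow> bilinear_op pr \<Longrightarrow> bilinear_op (odot_op sc pr)"
  by (simp add: bilinear_op_def odot_op_def smul_def fun_eq_iff distrib_left)

lemma bilinear_op_star: "bilinear_op sc \<Longrightarrow> bilinear_op pr \<Longrightarrow> bilinear_op (star_op sc pr)"
  using bilinear_op_circ[of sc pr]
  by (simp add: bilinear_op_def star_op_def smul_def fun_eq_iff distrib_left)

locale quadratic_LD =
  fixes sc pr :: "('k::field, 'n::finite) op" and w :: "('n \<Rightarrow> 'k) \<Rightarrow> ('n \<Rightarrow> 'k) \<Rightarrow> 'k"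
  assumes quadratic: "quadratic_LD_algebra sc pr w"
begin

lemma bilinear_sc: "bilinear_op sc" and bilinear_pr: "bilinear_op pr"
  and bilinear_w: "bilinear_form w"
  and w_sym: "w x y = w y x"
  and w_nondegenerate_zero: "(\<And>z. w x z = 0) \<Longrightarrow> x = 0"
  and w_pr_circ: "w (pr x y) z = w x (circ_op sc pr y z + circ_op sc pr z y)"
  and w_sc: "w (sc x y) z = - w y (circ_op sc pr x z)"
  using quadratic by (auto simp: quadratic_LD_algebra_def LD_algebra_def)

sublocale sc: bilinear_operation sc by (rule bilinear_operation.intro, rule bilinear_sc)
sublocale pr: bilinear_operation pr by (rule bilinear_operation.intro, rule bilinear_pr)
sublocale circ: bilinear_operation "circ_op sc pr"
  by (rule bilinear_operation.intro, rule bilinear_op_circ[OF bilinear_sc bilinear_pr])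
sublocale odot: bilinear_operation "odot_op sc pr"
  by (rule bilinear_operation.intro, rule bilinear_op_odot[OF bilinear_sc bilinear_pr])
sublocale star: bilinear_operation "star_op sc pr"
  by (rule bilinear_operation.intro, rule bilinear_op_star[OF bilinear_sc bilinear_pr])

lemma w_add_left: "w (x + y) z = w x z + w y z"
  and w_add_right: "w z (x + y) = w z x + w z y"
  and w_smul_left: "w (smul c x) z = c * w x z"
  and w_smul_right: "w z (smul c x) = c * w z x"
  using bilinear_w by (simp_all add: bilinear_form_def)

lemma additive_w_left: "additive (\<lambda>x. w x z)"
  by (simp add: additive_def w_add_left)

lemma w_diff_left: "w (x - y) z = w x z - w y z"
  by (rule additive.diff[OF additive_w_left])

lemma w_diff_right: "w z (x - y) = w z x - w z y"
  by (simp add: w_sym[of z] w_diff_left)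

lemma w_nondegenerate: "(\<And>z. w x z = w y z) \<Longrightarrow> x = y"
  using w_nondegenerate_zero[of "x - y"] by (simp add: w_diff_left)

lemma w_expand_right: "w y v = (\<Sum>j\<in>UNIV. v j * w y (bvec j))"
  by (rule linear_functional_expansion) (simp_all add: additive_def w_add_right w_smul_right)

lemma w_pr: "w (pr x y) z = w x (star_op sc pr y z)"
  by (simp add: w_pr_circ star_op_def)

lemma w_circ_right: "w y (circ_op sc pr x z) = - w (sc x y) z"
  by (simp add: w_sc)

lemma w_odot: "w (odot_op sc pr x u) a = w u (circ_op sc pr a x)"
  by (simp add: odot_op_def w_add_left w_pr_circ w_sc w_add_right circ_op_def)

lemma additive_sharp: "additive (sharp w)"
  by (simp add: additive_def sharp_def w_add_left fun_eq_iff)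

lemma sharp_smul: "sharp w (smul c x) = smul c (sharp w x)"
  by (rule ext) (simp only: sharp_def w_smul_left, simp add: smul_def)

lemma inj_sharp: "inj (sharp w)"
proof (rule injI)
  fix x y assume "sharp w x = sharp w y"
  then have on_basis: "w x (bvec i) = w y (bvec i)" for i
    unfolding sharp_def by (rule fun_cong)
  show "x = y"
  proof (rule w_nondegenerate)
    show "w x z = w y z" for z
      by (simp only: w_expand_right[of x z] w_expand_right[of y z] on_basis)
  qed
qed

lemma surj_sharp: "surj (sharp w)"
proof (rule finite_dimensional_vector_space.linear_inj_imp_surj[OF finite_dimensional_smul _ inj_sharp])
  show "Vector_Spaces.linear smul smul (sharp w)"
    using vector_space_smul additive_sharp sharp_smul by (simp add: linear_iff additive_def)
qed

definition dual_basis :: "'n \<Rightarrow> 'n \<Rightarrow> 'k" where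
  "dual_basis p = inv (sharp w) (bvec p)"

lemma sharp_dual_basis: "sharp w (dual_basis p) = bvec p"
  unfolding dual_basis_def by (rule surj_f_inv_f[OF surj_sharp])

lemma w_dual_basis: "w (dual_basis p) v = v p"
proof -
  have "w (dual_basis p) (bvec i) = bvec p i" for i
    using fun_cong[OF sharp_dual_basis[of p], of i] by (simp add: sharp_def)
  then show ?thesis by (simp add: w_expand_right[of _ v] sum_mult_bvec)
qed

lemma dual_basis_expansion: "x = (\<Sum>p\<in>UNIV. smul (w x (bvec p)) (dual_basis p))"
proof (rule injD[OF inj_sharp])
  have "sharp w x = (\<Sum>p\<in>UNIV. smul (sharp w x p) (bvec p))"
    by (rule coordinate_expansion[of "sharp w x"])
  also have "\<dots> = sharp w (\<Sum>p\<in>UNIV. smul (w x (bvec p)) (dual_basis p))"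
    by (simp only: additive_sum_smul[where s=smul, OF additive_sharp sharp_smul] sharp_dual_basis)
      (simp add: sharp_def)
  finally show "sharp w x = sharp w (\<Sum>p\<in>UNIV. smul (w x (bvec p)) (dual_basis p))" .
qed

lemma linear_functional_dual_expansion:
  assumes "additive f" and "\<And>c a. f (smul c a) = c * f a"
  shows "f x = (\<Sum>p\<in>UNIV. w x (bvec p) * f (dual_basis p))"
proof -
  have "f x = f (\<Sum>p\<in>UNIV. smul (w x (bvec p)) (dual_basis p))"
    using dual_basis_expansion[of x] by (rule arg_cong)
  also have "\<dots> = (\<Sum>p\<in>UNIV. w x (bvec p) * f (dual_basis p))"
    by (rule additive_sum_smul[where s="(*)", OF assms])
  finally show ?thesis .
qed

end

locale quadratic_LD_with_tensor = quadratic_LD sc pr w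
  for sc pr :: "('k::field, 'n::finite) op" and w :: "('n \<Rightarrow> 'k) \<Rightarrow> ('n \<Rightarrow> 'k) \<Rightarrow> 'k" +
  fixes r :: "'n \<Rightarrow> 'n \<Rightarrow> 'k"
begin

definition P :: "('n \<Rightarrow> 'k) \<Rightarrow> 'n \<Rightarrow> 'k" where "P x = Tmap r (sharp w x)"
definition Q :: "('n \<Rightarrow> 'k) \<Rightarrow> 'n \<Rightarrow> 'k" where "Q x = Tmap (tau2 r) (sharp w x)"
definition R :: "('n \<Rightarrow> 'k) \<Rightarrow> 'n \<Rightarrow> 'k" where "R x = P x + Q x"

lemma P_apply: "P x j = (\<Sum>i\<in>UNIV. r i j * w x (bvec i))"
  by (simp add: P_def Tmap_def sharp_def)

lemma Q_apply: "Q x j = (\<Sum>i\<in>UNIV. r j i * w x (bvec i))"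
  by (simp add: Q_def Tmap_def sharp_def tau2_def)

lemma P_add: "P (x + y) = P x + P y"
  by (rule ext) (simp add: P_apply w_add_left distrib_left sum.distrib)

lemma Q_add: "Q (x + y) = Q x + Q y"
  by (rule ext) (simp add: Q_apply w_add_left distrib_left sum.distrib)

lemma P_smul: "P (smul c x) = smul c (P x)"
  by (rule ext) (simp only: P_apply w_smul_left, simp add: smul_def P_apply sum_distrib_left mult_ac)

lemma Q_smul: "Q (smul c x) = smul c (Q x)"
  by (rule ext) (simp only: Q_apply w_smul_left, simp add: smul_def Q_apply sum_distrib_left mult_ac)

lemma additive_P: "additive P" and additive_Q: "additive Q" and additive_R: "additive R"
  by (simp_all add: additive_def P_add Q_add R_def)

lemma P_diff: "P (x - y) = P x - P y" and Q_diff: "Q (x - y) = Q x - Q y"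
  by (simp_all add: additive.diff[OF additive_P] additive.diff[OF additive_Q])

lemma P_adjoint: "w (P x) y = w x (Q y)"
proof -
  have "w (P x) y = (\<Sum>j\<in>UNIV. \<Sum>i\<in>UNIV. r i j * w x (bvec i) * w y (bvec j))"
    by (simp add: w_sym[of "P x"] w_expand_right[of y "P x"] P_apply sum_distrib_left mult_ac)
  also have "\<dots> = (\<Sum>i\<in>UNIV. \<Sum>j\<in>UNIV. r i j * w y (bvec j) * w x (bvec i))"
    by (subst sum.swap) (simp add: mult_ac)
  also have "\<dots> = w x (Q y)"
    by (simp add: w_expand_right[of x "Q y"] Q_apply sum_distrib_right)
  finally show ?thesis .
qed

lemma Q_adjoint: "w (Q x) y = w x (P y)"
  using P_adjoint[of y x] by (simp add: w_sym)

lemma P_dual_basis: "P (dual_basis p) = r p"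
  by (rule ext) (simp add: P_apply w_dual_basis sum_mult_bvec')

lemma Q_dual_basis: "Q (dual_basis s) = (\<lambda>k. r k s)"
  by (rule ext) (simp add: Q_apply w_dual_basis sum_mult_bvec')

definition circ_defect :: "('n \<Rightarrow> 'k) \<Rightarrow> ('n \<Rightarrow> 'k) \<Rightarrow> 'n \<Rightarrow> 'k" where
  "circ_defect x y = circ_op sc pr (P x) (P y) - P (circ_op sc pr x (P y) - circ_op sc pr (Q x) y)"

lemma circ_defect_add_left: "circ_defect (a + b) y = circ_defect a y + circ_defect b y"
  and circ_defect_add_right: "circ_defect x (a + b) = circ_defect x a + circ_defect x b"
  by (simp_all add: circ_defect_def P_add Q_add P_diff circ.add_left circ.add_right algebra_simps)

lemma circ_defect_smul_left: "circ_defect (smul c a) y = smul c (circ_defect a y)"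
  and circ_defect_smul_right: "circ_defect x (smul c a) = smul c (circ_defect x a)"
  by (simp_all only: circ_defect_def P_smul Q_smul circ.smul_left circ.smul_right
      smul_diff[symmetric])

lemma w_circ_defect_dual_basis:
  "w (circ_defect (dual_basis q) (dual_basis p)) (dual_basis s) = S_tensor sc pr r p q s"
proof -
  let ?fp = "dual_basis p" and ?fq = "dual_basis q" and ?fs = "dual_basis s"
  have "w (circ_defect ?fq ?fp) ?fs = w (circ_op sc pr (P ?fq) (P ?fp)) ?fs
      - w (P (circ_op sc pr ?fq (P ?fp))) ?fs + w (P (circ_op sc pr (Q ?fq) ?fp)) ?fs"
    by (simp add: circ_defect_def P_diff w_diff_left)
  also have "w (circ_op sc pr (P ?fq) (P ?fp)) ?fs
      = (\<Sum>j\<in>UNIV. \<Sum>l\<in>UNIV. r p j * r q l * circ_op sc pr (bvec l) (bvec j) s)"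
    by (simp add: w_sym[of _ ?fs] w_dual_basis P_dual_basis circ.expand[of "r q"] sum_distrib_left)
      (subst sum.swap, simp add: mult_ac)
  also have "w (P (circ_op sc pr ?fq (P ?fp))) ?fs
      = (\<Sum>j\<in>UNIV. \<Sum>k\<in>UNIV. r p j * r k s * odot_op sc pr (bvec j) (bvec k) q)"
    by (simp only: P_adjoint P_dual_basis Q_dual_basis w_sym[of "circ_op sc pr _ _"] w_odot[symmetric])
      (simp add: w_sym[of _ ?fq] w_dual_basis odot.expand[of "r p"])
  also have "w (P (circ_op sc pr (Q ?fq) ?fp)) ?fs
      = - (\<Sum>i\<in>UNIV. \<Sum>k\<in>UNIV. r i q * r k s * sc (bvec i) (bvec k) p)"
    by (simp only: P_adjoint Q_dual_basis w_sym[of "circ_op sc pr _ _"] w_circ_right)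
      (simp add: w_sym[of _ ?fp] w_dual_basis sc.expand[of "\<lambda>k. r k q"])
  finally show ?thesis
    by (simp add: S_tensor_apply)
qed

lemma w_circ_defect_expansion:
  "w (circ_defect y x) z = (\<Sum>s\<in>UNIV. w z (bvec s) * (\<Sum>q\<in>UNIV. w y (bvec q) *
      (\<Sum>p\<in>UNIV. w x (bvec p) * S_tensor sc pr r p q s)))"
proof -
  have "w (circ_defect y x) z = (\<Sum>s\<in>UNIV. w z (bvec s) * w (circ_defect y x) (dual_basis s))"
    by (rule linear_functional_dual_expansion)
      (simp_all add: additive_def w_add_right w_smul_right w_sym[of z])
  moreover have "w (circ_defect y x) (dual_basis s)
      = (\<Sum>q\<in>UNIV. w y (bvec q) * w (circ_defect (dual_basis q) x) (dual_basis s))" for s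
    by (rule linear_functional_dual_expansion[where f="\<lambda>y. w (circ_defect y x) (dual_basis s)"])
      (simp_all add: additive_def circ_defect_add_left circ_defect_smul_left w_add_left w_smul_left)
  moreover have "w (circ_defect (dual_basis q) x) (dual_basis s)
      = (\<Sum>p\<in>UNIV. w x (bvec p) * S_tensor sc pr r p q s)" for q s
    by (subst linear_functional_dual_expansion
          [where f="\<lambda>x. w (circ_defect (dual_basis q) x) (dual_basis s)"])
      (simp_all add: additive_def circ_defect_add_right circ_defect_smul_right w_add_left
        w_smul_left w_circ_defect_dual_basis)
  ultimately show ?thesis by simp
qed

lemma S_tensor_eq_0_iff: "S_tensor sc pr r = (\<lambda>p q s. 0) \<longleftrightarrow> twisted_identity (circ_op sc pr) P Q"
proof -
  have "twisted_identity (circ_op sc pr) P Q \<longleftrightarrow> (\<forall>x y. circ_defect x y = 0)"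
    by (simp add: twisted_identity_def circ_defect_def)
  also have "\<dots> \<longleftrightarrow> S_tensor sc pr r = (\<lambda>p q s. 0)"
  proof
    assume "\<forall>x y. circ_defect x y = 0"
    then have "S_tensor sc pr r p q s = 0" for p q s
      using w_circ_defect_dual_basis[of q p s] additive.zero[OF additive_w_left] by simp
    then show "S_tensor sc pr r = (\<lambda>p q s. 0)"
      by (simp add: fun_eq_iff)
  next
    assume "S_tensor sc pr r = (\<lambda>p q s. 0)"
    then show "\<forall>x y. circ_defect x y = 0"
      by (auto intro: w_nondegenerate_zero simp: w_circ_defect_expansion)
  qed
  finally show ?thesis ..
qed

lemma twisted_sc_of_twisted_circ_swap:
  assumes "twisted_identity (circ_op sc pr) Q P"
  shows "twisted_identity sc P Q"
  using assms unfolding twisted_identity_def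
  by (intro allI w_nondegenerate) (simp add: w_sc P_adjoint w_diff_left w_diff_right circ.diff_right Q_diff)

lemma twisted_circ_of_twisted_sc_pr:
  assumes "twisted_identity sc P Q" and "twisted_identity pr P Q"
  shows "twisted_identity (circ_op sc pr) P Q"
  unfolding twisted_identity_def
proof (intro allI)
  fix x y
  have "circ_op sc pr x (P y) - circ_op sc pr (Q x) y
      = (sc x (P y) - sc (Q x) y) + (pr x (P y) - pr (Q x) y)"
    by (simp add: circ_op_def algebra_simps)
  then show "circ_op sc pr (P x) (P y) = P (circ_op sc pr x (P y) - circ_op sc pr (Q x) y)"
    using assms by (simp only: P_add twisted_identity_def circ_op_def)
qed

lemma Tmap_symmetrization: "Tmap (\<lambda>p q. r p q + tau2 r p q) (sharp w y) = R y"
  by (rule ext) (simp add: Tmap_def sharp_def R_def P_apply Q_apply tau2_def distrib_right sum.distrib)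

lemma R_symmetric: "w (R x) y = w x (R y)"
  by (simp add: R_def w_add_left w_add_right P_adjoint w_sym[of _ "P y"] w_sym[of "Q x"] add.commute)

end

locale quadratic_LD_invariant = quadratic_LD_with_tensor sc pr w r
  for sc pr :: "('k::field, 'n::finite) op" and w :: "('n \<Rightarrow> 'k) \<Rightarrow> ('n \<Rightarrow> 'k) \<Rightarrow> 'k"
    and r :: "'n \<Rightarrow> 'n \<Rightarrow> 'k" +
  assumes invariant: "invariant_tensor sc pr (\<lambda>p q. r p q + tau2 r p q)"
begin

lemma R_apply: "R x q = (\<Sum>i\<in>UNIV. (r i q + r q i) * w x (bvec i))"
  by (simp add: R_def P_apply Q_apply sum.distrib distrib_right)

lemma invariant_odot_circ:
  "(\<Sum>i\<in>UNIV. (r i q + r q i) * odot_op sc pr x (bvec i) p)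
    = (\<Sum>j\<in>UNIV. (r p j + r j p) * circ_op sc pr (bvec j) x q)"
proof -
  let ?s = "(\<lambda>p q. r p q + tau2 r p q)"
  have "\<forall>p q. tensmap (\<lambda>y. odot_op sc pr x y) id ?s p q - tensmap id (\<lambda>y. circ_op sc pr y x) ?s p q = 0"
    using invariant unfolding invariant_tensor_def fun_eq_iff by blast
  then have "tensmap (\<lambda>y. odot_op sc pr x y) id ?s p q = tensmap id (\<lambda>y. circ_op sc pr y x) ?s p q"
    by simp
  then show ?thesis
    by (simp add: tensmap_id_left tensmap_id_right tau2_def)
qed

lemma invariant_star_pr:
  "(\<Sum>i\<in>UNIV. (r q i + r i q) * star_op sc pr x (bvec i) p)
    = (\<Sum>j\<in>UNIV. (r j p + r p j) * pr (bvec j) x q)"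
proof -
  let ?s = "(tau2 (\<lambda>p q. r p q + tau2 r p q))"
  have "\<forall>p q. tensmap (\<lambda>y. star_op sc pr x y) id ?s p q - tensmap id (\<lambda>y. pr y x) ?s p q = 0"
    using invariant unfolding invariant_tensor_def fun_eq_iff by blast
  then have "tensmap (\<lambda>y. star_op sc pr x y) id ?s p q = tensmap id (\<lambda>y. pr y x) ?s p q"
    by simp
  then show ?thesis
    by (simp add: tensmap_id_left tensmap_id_right tau2_def)
qed

lemma R_circ_left: "R (circ_op sc pr a x) = circ_op sc pr (R a) x"
proof (rule ext)
  fix q
  have "w (circ_op sc pr a x) (bvec i) = (\<Sum>p\<in>UNIV. odot_op sc pr x (bvec i) p * w a (bvec p))" for i
    by (metis w_odot w_sym w_expand_right)
  then have "R (circ_op sc pr a x) q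
      = (\<Sum>p\<in>UNIV. w a (bvec p) * (\<Sum>i\<in>UNIV. (r i q + r q i) * odot_op sc pr x (bvec i) p))"
    by (simp add: R_apply sum_distrib_left sum_distrib_right mult_ac) (subst sum.swap, simp)
  also have "\<dots> = (\<Sum>p\<in>UNIV. w a (bvec p) * (\<Sum>j\<in>UNIV. (r p j + r j p) * circ_op sc pr (bvec j) x q))"
    by (simp only: invariant_odot_circ)
  also have "\<dots> = circ_op sc pr (R a) x q"
    by (simp add: circ.expand_left[of "R a"] R_apply sum_distrib_left sum_distrib_right mult_ac)
      (subst sum.swap, simp)
  finally show "R (circ_op sc pr a x) q = circ_op sc pr (R a) x q" .
qed

lemma R_star_right: "R (star_op sc pr x b) = star_op sc pr x (R b)"
proof (rule ext)
  fix p
  have "w (star_op sc pr x b) (bvec j) = (\<Sum>q\<in>UNIV. pr (bvec j) x q * w b (bvec q))" for j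
    by (metis w_pr w_sym w_expand_right)
  then have "R (star_op sc pr x b) p
      = (\<Sum>q\<in>UNIV. w b (bvec q) * (\<Sum>j\<in>UNIV. (r j p + r p j) * pr (bvec j) x q))"
    by (simp add: R_apply sum_distrib_left sum_distrib_right mult_ac) (subst sum.swap, simp)
  also have "\<dots> = (\<Sum>q\<in>UNIV. w b (bvec q) * (\<Sum>i\<in>UNIV. (r q i + r i q) * star_op sc pr x (bvec i) p))"
    by (simp only: invariant_star_pr)
  also have "\<dots> = star_op sc pr x (R b) p"
    by (simp add: star.expand_right[of _ "R b"] R_apply sum_distrib_left sum_distrib_right mult_ac)
      (subst sum.swap, simp)
  finally show "R (star_op sc pr x b) p = star_op sc pr x (R b) p" .
qed

lemma R_circ_right: "R (circ_op sc pr a b) = circ_op sc pr a (R b)"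
proof -
  have "R (circ_op sc pr a b) + circ_op sc pr (R b) a = circ_op sc pr a (R b) + circ_op sc pr (R b) a"
    using R_star_right[of a b] by (simp only: star_op_def additive.add[OF additive_R] R_circ_left)
  then show ?thesis by simp
qed

lemma R_star_left: "R (star_op sc pr a b) = star_op sc pr (R a) b"
  by (simp add: star_op_def additive.add[OF additive_R] R_circ_left[of a] R_circ_right[of b])

lemma R_sc_left: "R (sc x y) = sc (R x) y"
  and R_sc_right: "R (sc x y) = sc x (R y)"
  by (rule w_nondegenerate; simp add: R_symmetric w_sc R_circ_left[symmetric] R_circ_right[symmetric])+

lemma R_pr_left: "R (pr x y) = pr (R x) y"
  and R_pr_right: "R (pr x y) = pr x (R y)"
  by (rule w_nondegenerate; simp add: R_symmetric w_pr R_star_left[symmetric] R_star_right[symmetric])+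

lemma twisted_circ_swap:
  "twisted_identity (circ_op sc pr) P Q \<Longrightarrow> twisted_identity (circ_op sc pr) Q P"
  by (rule twisted_identity_swap[where m="circ_op sc pr" and P=P and Q=Q and R=R,
        OF circ.diff_left circ.diff_right additive_Q additive_R R_def R_circ_left R_circ_right])

lemma twisted_star_swap:
  "twisted_identity (star_op sc pr) P Q \<Longrightarrow> twisted_identity (star_op sc pr) Q P"
  by (rule twisted_identity_swap[where m="star_op sc pr" and P=P and Q=Q and R=R,
        OF star.diff_left star.diff_right additive_Q additive_R R_def R_star_left R_star_right])

lemma twisted_star_of_twisted_circ:
  assumes "twisted_identity (circ_op sc pr) P Q"
  shows "twisted_identity (star_op sc pr) P Q"
  unfolding twisted_identity_def
proof (intro allI)
  fix x y
  txt \<open>Centrality of \<open>R\<close> moves \<open>P + Q\<close> across \<open>\<circ>\<close>, which turns the second half of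
    \<open>x \<star> P y - Q x \<star> y\<close> into the \<open>\<circ>\<close>-argument with \<open>x\<close> and \<open>y\<close> exchanged.\<close>
  have "circ_op sc pr (P y) x + circ_op sc pr (Q y) x = circ_op sc pr y (P x) + circ_op sc pr y (Q x)"
    using R_circ_left[of y x] R_circ_right[of y x] by (simp add: R_def circ.add_left circ.add_right)
  then have "star_op sc pr x (P y) - star_op sc pr (Q x) y
      = (circ_op sc pr x (P y) - circ_op sc pr (Q x) y) + (circ_op sc pr y (P x) - circ_op sc pr (Q y) x)"
    by (simp add: star_op_def algebra_simps)
  moreover have "P (circ_op sc pr x (P y) - circ_op sc pr (Q x) y) = circ_op sc pr (P x) (P y)" for x y
    using assms by (simp add: twisted_identity_def)
  ultimately show "star_op sc pr (P x) (P y) = P (star_op sc pr x (P y) - star_op sc pr (Q x) y)"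
    by (simp only: P_add) (simp add: star_op_def)
qed

lemma twisted_pr_of_twisted_star_swap:
  assumes "twisted_identity (star_op sc pr) Q P"
  shows "twisted_identity pr P Q"
  unfolding twisted_identity_def
proof (intro allI w_nondegenerate)
  fix x y z
  have "P v = R v - Q v" for v
    by (simp add: R_def)
  then have "P (star_op sc pr y (Q z)) = star_op sc pr (R y) (Q z) - Q (star_op sc pr y (Q z))"
    by (simp only: R_star_left)
  also have "\<dots> = star_op sc pr (P y) (Q z) - Q (star_op sc pr (P y) z)"
    using assms by (simp add: twisted_identity_def R_def star.add_left Q_diff)
  finally have "P (star_op sc pr y (Q z)) = star_op sc pr (P y) (Q z) - Q (star_op sc pr (P y) z)" .
  then show "w (pr (P x) (P y)) z = w (P (pr x (P y) - pr (Q x) y)) z"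
    by (simp add: w_pr P_adjoint Q_adjoint w_diff_left w_diff_right)
qed

lemma S_tensor_eq_0_iff_twisted_sc_pr:
  "S_tensor sc pr r = (\<lambda>p q s. 0) \<longleftrightarrow> twisted_identity sc P Q \<and> twisted_identity pr P Q"
proof
  assume "S_tensor sc pr r = (\<lambda>p q s. 0)"
  then have circ: "twisted_identity (circ_op sc pr) P Q"
    by (simp add: S_tensor_eq_0_iff)
  show "twisted_identity sc P Q \<and> twisted_identity pr P Q"
    using twisted_sc_of_twisted_circ_swap[OF twisted_circ_swap[OF circ]]
      twisted_pr_of_twisted_star_swap[OF twisted_star_swap[OF twisted_star_of_twisted_circ[OF circ]]]
    by blast
next
  assume "twisted_identity sc P Q \<and> twisted_identity pr P Q"
  then show "S_tensor sc pr r = (\<lambda>p q s. 0)"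
    by (simp add: S_tensor_eq_0_iff twisted_circ_of_twisted_sc_pr)
qed

lemma sc_argument_eq: "sc (P x) y + sc x (P y) - sc x (R y) = sc x (P y) - sc (Q x) y"
proof -
  have "sc x (R y) = sc (R x) y"
    by (simp only: R_sc_right[symmetric] R_sc_left)
  then show ?thesis
    by (simp add: R_def sc.add_left)
qed

lemma pr_argument_eq: "pr (P x) y + pr x (P y) - pr x (R y) = pr x (P y) - pr (Q x) y"
proof -
  have "pr x (R y) = pr (R x) y"
    by (simp only: R_pr_right[symmetric] R_pr_left)
  then show ?thesis
    by (simp add: R_def pr.add_left)
qed

end

theorem mainTheorem16:
  fixes sc pr :: "('k::field, 'n::finite) op"
    and w :: "('n \<Rightarrow> 'k) \<Rightarrow> ('n \<Rightarrow> 'k) \<Rightarrow> 'k"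
    and r :: "'n \<Rightarrow> 'n \<Rightarrow> 'k"
    and P :: "('n \<Rightarrow> 'k) \<Rightarrow> ('n \<Rightarrow> 'k)"
  assumes "quadratic_LD_algebra sc pr w"
    and "invariant_tensor sc pr (\<lambda>p q. r p q + tau2 r p q)"
    and "\<And>x. P x = Tmap r (sharp w x)"
  shows "S_tensor sc pr r = (\<lambda>p q s. 0) \<longleftrightarrow>
    (\<forall>x y.
      sc (P x) (P y) = P (sc (P x) y + sc x (P y)
                          - sc x (Tmap (\<lambda>p q. r p q + tau2 r p q) (sharp w y))) \<and>
      pr (P x) (P y) = P (pr (P x) y + pr x (P y)
                          - pr x (Tmap (\<lambda>p q. r p q + tau2 r p q) (sharp w y))))"
proof -
  interpret L: quadratic_LD_invariant sc pr w r
    using assms(1,2) by unfold_locales (simp_all add: quadratic_LD_def)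
  have "P = L.P"
    by (rule ext) (simp add: assms(3) L.P_def)
  then show ?thesis
    by (simp add: L.Tmap_symmetrization L.sc_argument_eq L.pr_argument_eq
        L.S_tensor_eq_0_iff_twisted_sc_pr twisted_identity_def all_conj_distrib)
qed

end
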